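(* Let $p,q$ be non-zero coprime integers, and let $1\le k\le |p|-1$, $1\le l\le |q|-1$. Let $z_{ij}\in\mathbb{C}$ ($0\le i\le |q|$, $0\le j\le |p|-1$) be the coordinate of the vertex $v^{|p|,k}_{[i+j+1]}$ of the moving polygon after the $i$-th step of the $(|p|,k;|q|,l)$-trochoid (the $0$-th step being the initial position). Then (i) $z_{i0}=z_{i+1,|p|-1}$ for $0\le i\le |q|-1$; (ii) the rotation about $z_{i0}$ by angle $\theta(|p|,k;|q|,l)$ sends $z_{ij}$ to $z_{i+1,j-1}$ for $0\le i\le|q|-1$, $1\le j\le |p|-1$; (iii) $z_{|q|j}=z_{0j}$ for $0\le j\le|p|-1$; and not all $z_{ij}$ are equal. Consequently, $a_{ij}\mapsto (z_{ij},e^{\theta(|p|,k;|q|,l)\sqrt{-1}})$ is a non-trivial $\mathrm{Rot}(\mathbb{E}^2)$-coloring of the standard diagram $D(p,q)$ of the $(p,q)$-torus knot, with all rotation angles equal to $\theta(|p|,k;|q|,l)$.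
   Context: $\mathrm{Rot}(\mathbb{E}^2)=\mathbb{C}\times\mathrm{U}(1)$ with $(z,e^{\theta\sqrt{-1}})\ast(w,e^{\eta\sqrt{-1}})=((z-w)e^{\eta\sqrt{-1}}+w,e^{\theta\sqrt{-1}})$, i.e. the quandle of rotations of the plane, $(z,e^{\theta\sqrt{-1}})$ being the rotation about $z$ by $\theta$; a coloring of a diagram assigns quandle elements to arcs so that at each crossing (outgoing under arc) $=$ (incoming under arc) $\ast$ (over arc) for the appropriate orientation convention; constant colorings are trivial. Regular polygons: for $m\ge2$ let $v^m_0,\dots,v^m_{m-1}$ be the vertices, in counterclockwise order, of a convex regular $m$-gon in $\mathbb{C}$; for $1\le k\le m-1$ put $v^{m,k}_i=v^m_{[ik]}$, where $[r]\in\{0,\dots,m-1\}$ is the residue of $r$ mod $m$, and let $\Pi(m,k)$ be the (possibly degenerate, star) polygon joining $v^{m,k}_{[i]}$ to $v^{m,k}_{[i+1]}$ for all $i$. For $m,n\ge2$, $1\le k\le m-1$, $1\le l\le n-1$ set $\theta(m,k;n,l)=\bigl(\frac{m-2k}{m}-\frac{n-2l}{n}\bigr)\pi$. The $(m,k;n,l)$-trochoid: take $\Pi(m,k)$ and $\Pi(n,l)$ with equal side lengths, placed so that $v^{m,k}_{[0]}=v^{n,l}_{[0]}$ and $v^{m,k}_{[1]}=v^{n,l}_{[1]}$. Keeping $\Pi(n,l)$ fixed, at the $i$-th step ($i=1,2,\dots$) rotate $\Pi(m,k)$ about its vertex $v^{m,k}_{[i]}$ (which then coincides with $v^{n,l}_{[i]}$,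 indices of $\Pi(n,l)$ taken mod $n$) by angle $\theta(m,k;n,l)$; after this step $v^{m,k}_{[i+1]}$ coincides with $v^{n,l}_{[i+1]}$. Explicitly, with $u_j=v^{n,l}_{[j]}$, $d=u_1-u_0$, $\omega=e^{2\pi k\sqrt{-1}/m}$, $\zeta=e^{2\pi l\sqrt{-1}/n}$, one has $u_{j+1}-u_j=d\zeta^j$, and after the $i$-th step the vertex $v^{m,k}_{[i+j+1]}$ of the moving polygon is at $u_i+d\zeta^i(1+\omega+\dots+\omega^j)$ for $0\le j\le m-1$. The diagram $D(p,q)$: a diagram of the $(p,q)$-torus knot (closed $|p|$-strand braid diagram with $|q|$ blocks) whose arcs are labelled $a_{ij}$, $0\le i\le |q|$, $0\le j\le|p|-1$, with $a_{i0}$ and $a_{i+1,|p|-1}$ denoting the same arc and $a_{|q|j}$, $a_{0j}$ denoting the same arc; in the $i$-th block the arc $a_{i0}$ passes over the strands, and for $1\le j\le|p|-1$ there is a crossing with over arc $a_{i0}$, incoming under arc $a_{ij}$ and outgoing under arc $a_{i+1,j-1}$, whose coloring condition reads $\mathrm{color}(a_{i+1,j-1})=\mathrm{color}(a_{ij})\ast\mathrm{color}(a_{i0})$. *)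

theory Defs
  imports "HOL-Analysis.Analysis"
begin

text \<open>The quandle Rot(E^2): pairs (z, u) with z a point of the plane (complex number)
  and u a unit complex number (element of U(1)); (z,u) is the rotation about z by arg u.\<close>

definition RotE2 :: "(complex \<times> complex) set" where
  "RotE2 = {(z, u). cmod u = 1}"

definition rot_op :: "complex \<times> complex \<Rightarrow> complex \<times> complex \<Rightarrow> complex \<times> complex" where
  "rot_op x y = ((fst x - fst y) * snd y + fst y, snd x)"

definition rotate :: "complex \<Rightarrow> real \<Rightarrow> complex \<Rightarrow> complex" where
  "rotate c t z = (z - c) * cis t + c"

definition reg_vertex :: "complex \<Rightarrow> real \<Rightarrow> real \<Rightarrow> nat \<Rightarrow> nat \<Rightarrow> complex" where
  "reg_vertex c rho alpha m s = c + complex_of_real rho * cis (alpha + 2 * pi * real s / real m)"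

definition star_vertex :: "complex \<Rightarrow> real \<Rightarrow> real \<Rightarrow> nat \<Rightarrow> nat \<Rightarrow> nat \<Rightarrow> complex" where
  "star_vertex c rho alpha m k r = reg_vertex c rho alpha m ((r * k) mod m)"

definition theta :: "nat \<Rightarrow> nat \<Rightarrow> nat \<Rightarrow> nat \<Rightarrow> real" where
  "theta m k n l = ((real m - 2 * real k) / real m - (real n - 2 * real l) / real n) * pi"

text \<open>Position of the vertex v^{m,k}_{[r]} of the moving polygon after the i-th step of the
  trochoid (step 0 = initial position): the moving polygon starts as the star polygon
  Pi(m,k) given by (c, rho, alpha); at step i+1 it is rotated by theta about its vertex
  v^{m,k}_{[i+1]}.\<close>
fun troch_pos :: "complex \<Rightarrow> real \<Rightarrow> real \<Rightarrow> nat \<Rightarrow> nat \<Rightarrow> real \<Rightarrow> nat \<Rightarrow> nat \<Rightarrow> complex" where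
  "troch_pos c rho alpha m k t 0 r = star_vertex c rho alpha m k (r mod m)"
| "troch_pos c rho alpha m k t (Suc i) r =
     rotate (troch_pos c rho alpha m k t i (Suc i mod m)) t (troch_pos c rho alpha m k t i (r mod m))"

text \<open>Colorings of the diagram D(p,q) (|p| strands, |q| blocks): arcs labelled (i,j),
  0 \<le> i \<le> |q|, 0 \<le> j \<le> |p|-1, with identifications a_{i0} = a_{i+1,|p|-1} and
  a_{|q|j} = a_{0j}, and crossing conditions
  col(a_{i+1,j-1}) = col(a_{ij}) * col(a_{i0}).\<close>
definition is_Dpq_coloring :: "int \<Rightarrow> int \<Rightarrow> (nat \<times> nat \<Rightarrow> complex \<times> complex) \<Rightarrow> bool" where
  "is_Dpq_coloring p q col \<longleftrightarrow>
     (let m = nat \<bar>p\<bar>; n = nat \<bar>q\<bar> in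
       (\<forall>i\<le>n. \<forall>j<m. col (i, j) \<in> RotE2) \<and>
       (\<forall>i<n. col (i, 0) = col (i + 1, m - 1)) \<and>
       (\<forall>j<m. col (n, j) = col (0, j)) \<and>
       (\<forall>i<n. \<forall>j. 1 \<le> j \<and> j \<le> m - 1 \<longrightarrow> col (i + 1, j - 1) = rot_op (col (i, j)) (col (i, 0))))"

definition nontrivial_Dpq_coloring :: "int \<Rightarrow> int \<Rightarrow> (nat \<times> nat \<Rightarrow> complex \<times> complex) \<Rightarrow> bool" where
  "nontrivial_Dpq_coloring p q col \<longleftrightarrow>
     is_Dpq_coloring p q col \<and>
     (\<exists>i i' j j'. i \<le> nat \<bar>q\<bar> \<and> i' \<le> nat \<bar>q\<bar> \<and> j < nat \<bar>p\<bar> \<and> j' < nat \<bar>p\<bar> \<and>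
        col (i, j) \<noteq> col (i', j'))"

end

theory Submission
  imports Defs
begin

(* Write \<omega> = cis(2 pi k/m) for the rotation carrying each vertex of the star
   polygon Pi(m,k) to the next one, \<rho> = cis t for the rotation of one trochoid step, and
   \<zeta> = \<rho> \<omega>.  By induction on the number of steps, after i steps the vertex
   v_[r] of the moving polygon sits at
       c + B (\<omega> - \<zeta>) (1 + \<zeta> + ... + \<zeta>^(i-1)) + B \<rho>^i \<omega>^r,     B = rho cis alpha,
   whatever the angle t is.  For t = theta(m,k;n,l) one has \<zeta> = cis(2 pi l/n), a
   non-trivial n-th root of unity, so the geometric sum vanishes after n steps and the
   polygon returns to its initial position (relabelled by n): this is (iii).  Conditions
   (i) and (ii) hold by the very definition of a trochoid step (a rotation about a vertex
   fixes that vertex), and two consecutive initial vertices differ since \<omega> \<noteq> 1.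
   Finally, (i)-(iii) together with non-constancy are exactly the conditions for a
   non-trivial Rot(E^2)-coloring of D(p,q) with constant angle t. *)

lemma power_mod_root_of_unity:
  fixes e :: "'a::monoid_mult"
  assumes "e ^ m = 1"
  shows "e ^ (r mod m) = e ^ r"
proof -
  have "e ^ r = e ^ (m * (r div m) + r mod m)" by simp
  also have "\<dots> = (e ^ m) ^ (r div m) * e ^ (r mod m)" by (simp only: power_add power_mult)
  finally show ?thesis using assms by simp
qed

lemma cis_rational_root_of_unity:
  assumes "m > 0"
  shows "cis (2 * pi * real k / real m) ^ m = 1"
proof -
  have "cis (2 * pi * real k / real m) ^ m = cis (real m * (2 * pi * real k / real m))"
    by (rule Complex.DeMoivre)
  also have "real m * (2 * pi * real k / real m) = 2 * pi * real k"
    using assms by simp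
  finally show ?thesis by (simp add: Ints_of_nat)
qed

lemma cis_rational_ne_1:
  assumes "0 < l" and "l < n"
  shows "cis (2 * pi * real l / real n) \<noteq> 1"
proof
  assume "cis (2 * pi * real l / real n) = 1"
  then have "cos (2 * pi * real l / real n) = 1"
    by (metis cis.sel(1) one_complex.sel(1))
  then obtain j :: int where "2 * pi * real l / real n = of_int j * 2 * pi"
    by (auto simp: cos_one_2pi_int)
  then have "real l / real n = of_int j" using assms by (simp add: field_simps)
  moreover have "0 < real l / real n" and "real l / real n < 1" using assms by auto
  ultimately show False by simp
qed

lemma geometric_sum_root_of_unity:
  fixes \<zeta> :: complex
  assumes "\<zeta> ^ n = 1" and "\<zeta> \<noteq> 1"
  shows "(\<Sum>a<n. \<zeta> ^ a) = 0"
  using assms by (simp add: sum_gp_strict)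

lemma star_vertex_closed_form:
  assumes "m > 0"
  shows "star_vertex c rho alpha m k r
           = c + complex_of_real rho * cis alpha * cis (2 * pi * real k / real m) ^ r"
proof -
  let ?e = "cis (2 * pi / real m)"
  have "cis (2 * pi * real (r * k mod m) / real m) = ?e ^ (r * k mod m)"
    by (simp add: Complex.DeMoivre field_simps)
  also have "\<dots> = ?e ^ (r * k)"
    using cis_rational_root_of_unity[OF assms, of 1]
    by (intro power_mod_root_of_unity) simp
  also have "\<dots> = cis (2 * pi * real k / real m) ^ r"
    by (simp add: Complex.DeMoivre field_simps)
  finally show ?thesis
    unfolding star_vertex_def reg_vertex_def by (simp add: cis_mult[symmetric])
qed

lemma troch_pos_mod:
  "troch_pos c rho alpha m k t i (r mod m) = troch_pos c rho alpha m k t i r"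
  by (cases i) simp_all

text \<open>Position after i steps, for an arbitrary step angle t; \<zeta> is the rotation that
  composes one polygon edge-step with one trochoid step.\<close>
lemma troch_pos_closed_form:
  fixes m k :: nat and rho alpha t :: real
  defines "\<omega> \<equiv> cis (2 * pi * real k / real m)"
  defines "\<zeta> \<equiv> cis t * \<omega>"
  defines "B \<equiv> complex_of_real rho * cis alpha"
  assumes "m > 0"
  shows "troch_pos c rho alpha m k t i r
           = c + B * (\<omega> - \<zeta>) * (\<Sum>a<i. \<zeta> ^ a) + B * cis t ^ i * \<omega> ^ r"
proof (induction i arbitrary: r)
  case 0
  have "\<omega> ^ (r mod m) = \<omega> ^ r"
    unfolding \<omega>_def by (rule power_mod_root_of_unity[OF cis_rational_root_of_unity[OF assms(4)]])
  then show ?case using assms(4) by (simp add: star_vertex_closed_form \<omega>_def B_def)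
next
  case (Suc i)
  let ?A = "c + B * (\<omega> - \<zeta>) * (\<Sum>a<i. \<zeta> ^ a)"
  have pivot: "troch_pos c rho alpha m k t i (Suc i mod m) = ?A + B * cis t ^ i * \<omega> ^ Suc i"
    by (simp add: troch_pos_mod Suc.IH)
  have "troch_pos c rho alpha m k t (Suc i) r
          = (B * cis t ^ i * \<omega> ^ r - B * cis t ^ i * \<omega> ^ Suc i) * cis t
            + (?A + B * cis t ^ i * \<omega> ^ Suc i)"
    by (simp only: troch_pos.simps troch_pos_mod pivot Suc.IH rotate_def) (simp add: algebra_simps)
  also have "\<dots> = ?A + B * (\<omega> - \<zeta>) * \<zeta> ^ i + B * cis t ^ Suc i * \<omega> ^ r"
    by (simp add: \<zeta>_def power_mult_distrib algebra_simps)
  finally show ?case by (simp add: algebra_simps)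
qed

text \<open>The angle theta(m,k;n,l) is chosen so that one trochoid step followed by one edge of
  Pi(m,k) amounts to one edge of Pi(n,l).\<close>
lemma cis_theta:
  assumes "m > 0" and "n > 0"
  shows "cis (theta m k n l) * cis (2 * pi * real k / real m) = cis (2 * pi * real l / real n)"
proof -
  have "theta m k n l + 2 * pi * real k / real m = 2 * pi * real l / real n"
    unfolding theta_def using assms by (simp add: field_simps)
  then show ?thesis by (simp add: cis_mult)
qed

text \<open>The label z_ij of the paper: the vertex v_[i+j+1] of the moving polygon after i steps.
  Thus z_i0 is the pivot of step i+1.\<close>
definition trochoid_vertex ::
    "complex \<Rightarrow> real \<Rightarrow> real \<Rightarrow> nat \<Rightarrow> nat \<Rightarrow> real \<Rightarrow> nat \<Rightarrow> nat \<Rightarrow> complex" where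
  "trochoid_vertex c rho alpha m k t i j = troch_pos c rho alpha m k t i ((i + j + 1) mod m)"

text \<open>Condition (i): a step is a rotation about its pivot, which therefore stays fixed.\<close>
lemma trochoid_vertex_pivot:
  assumes "m > 0"
  shows "trochoid_vertex c rho alpha m k t i 0 = trochoid_vertex c rho alpha m k t (i + 1) (m - 1)"
proof -
  let ?pivot = "troch_pos c rho alpha m k t i (Suc i mod m)"
  have "i + 1 + (m - 1) + 1 = Suc i + m" using assms by simp
  then have "(i + 1 + (m - 1) + 1) mod m = Suc i mod m" by (simp only: mod_add_self2)
  then have "trochoid_vertex c rho alpha m k t (i + 1) (m - 1) = rotate ?pivot t ?pivot"
    by (simp add: trochoid_vertex_def troch_pos_mod)
  also have "\<dots> = trochoid_vertex c rho alpha m k t i 0"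
    by (simp add: trochoid_vertex_def rotate_def)
  finally show ?thesis ..
qed

lemma trochoid_vertex_rotate:
  assumes "1 \<le> j"
  shows "rotate (trochoid_vertex c rho alpha m k t i 0) t (trochoid_vertex c rho alpha m k t i j)
           = trochoid_vertex c rho alpha m k t (i + 1) (j - 1)"
  using assms by (simp add: trochoid_vertex_def troch_pos_mod)

lemma trochoid_vertex_periodic:
  fixes m k :: nat
  defines "\<omega> \<equiv> cis (2 * pi * real k / real m)"
  assumes "m > 0" and "(cis t * \<omega>) ^ n = 1" and "cis t * \<omega> \<noteq> 1"
  shows "trochoid_vertex c rho alpha m k t n j = trochoid_vertex c rho alpha m k t 0 j"
proof -
  have "cis t ^ n * \<omega> ^ (n + j + 1) = (cis t * \<omega>) ^ n * \<omega> ^ (j + 1)"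
    by (simp add: power_add power_mult_distrib)
  moreover have "(\<Sum>a<n. (cis t * \<omega>) ^ a) = 0"
    using assms(3,4) by (rule geometric_sum_root_of_unity)
  ultimately show ?thesis
    using assms(3) unfolding trochoid_vertex_def troch_pos_mod troch_pos_closed_form[OF assms(2)]
      \<omega>_def by simp
qed

lemma trochoid_vertex_distinct:
  assumes "m > 0" and "rho \<noteq> 0" and "cis (2 * pi * real k / real m) \<noteq> 1"
  shows "trochoid_vertex c rho alpha m k t 0 0 \<noteq> trochoid_vertex c rho alpha m k t 0 1"
proof
  let ?\<omega> = "cis (2 * pi * real k / real m)"
  assume "trochoid_vertex c rho alpha m k t 0 0 = trochoid_vertex c rho alpha m k t 0 1"
  then have "complex_of_real rho * cis alpha * ?\<omega> * (?\<omega> - 1) = 0"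
    unfolding trochoid_vertex_def troch_pos_mod troch_pos_closed_form[OF assms(1)]
    by (simp add: algebra_simps power2_eq_square)
  with assms(2,3) show False by simp
qed

lemma nontrivial_rotation_coloring:
  fixes p q :: int and z :: "nat \<Rightarrow> nat \<Rightarrow> complex" and t :: real
  defines "m \<equiv> nat \<bar>p\<bar>" and "n \<equiv> nat \<bar>q\<bar>"
  assumes "\<forall>i<n. z i 0 = z (i + 1) (m - 1)"
    and "\<forall>i<n. \<forall>j. 1 \<le> j \<and> j \<le> m - 1 \<longrightarrow> rotate (z i 0) t (z i j) = z (i + 1) (j - 1)"
    and "\<forall>j<m. z n j = z 0 j"
    and "\<exists>i i' j j'. i \<le> n \<and> i' \<le> n \<and> j < m \<and> j' < m \<and> z i j \<noteq> z i' j'"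
  shows "nontrivial_Dpq_coloring p q (\<lambda>(i, j). (z i j, cis t))"
  unfolding nontrivial_Dpq_coloring_def is_Dpq_coloring_def Let_def RotE2_def rot_op_def
    m_def[symmetric] n_def[symmetric]
  using assms(3-6) by (auto simp: rotate_def)

theorem mainTheorem5:
  fixes p q :: int and k l :: nat
    and c1 c2 :: complex and rho1 rho2 alpha beta :: real
  assumes "p \<noteq> 0" and "q \<noteq> 0" and "coprime p q"
    and "1 \<le> k" and "int k \<le> \<bar>p\<bar> - 1"
    and "1 \<le> l" and "int l \<le> \<bar>q\<bar> - 1"
    and "rho1 > 0" and "rho2 > 0"
    and "star_vertex c1 rho1 alpha (nat \<bar>p\<bar>) k 0 = star_vertex c2 rho2 beta (nat \<bar>q\<bar>) l 0"
    and "star_vertex c1 rho1 alpha (nat \<bar>p\<bar>) k 1 = star_vertex c2 rho2 beta (nat \<bar>q\<bar>) l 1"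
  defines "m \<equiv> nat \<bar>p\<bar>" and "n \<equiv> nat \<bar>q\<bar>"
  defines "t \<equiv> theta m k n l"
  defines "z \<equiv> (\<lambda>i j. troch_pos c1 rho1 alpha m k t i ((i + j + 1) mod m))"
  shows "(\<forall>i<n. z i 0 = z (i + 1) (m - 1))
       \<and> (\<forall>i<n. \<forall>j. 1 \<le> j \<and> j \<le> m - 1 \<longrightarrow> rotate (z i 0) t (z i j) = z (i + 1) (j - 1))
       \<and> (\<forall>j<m. z n j = z 0 j)
       \<and> (\<exists>i i' j j'. i \<le> n \<and> i' \<le> n \<and> j < m \<and> j' < m \<and> z i j \<noteq> z i' j')
       \<and> nontrivial_Dpq_coloring p q (\<lambda>(i, j). (z i j, cis t))"
proof -
  have "0 < k" "k < m" "0 < l" "l < n" using assms(4-7) unfolding m_def n_def by auto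
  have z: "z = trochoid_vertex c1 rho1 alpha m k t"
    unfolding z_def trochoid_vertex_def by (rule refl)
  have "cis t * cis (2 * pi * real k / real m) = cis (2 * pi * real l / real n)"
    unfolding t_def using \<open>k < m\<close> \<open>l < n\<close> by (intro cis_theta) auto
  moreover have "cis (2 * pi * real l / real n) ^ n = 1" "cis (2 * pi * real l / real n) \<noteq> 1"
    using cis_rational_root_of_unity cis_rational_ne_1[OF \<open>0 < l\<close> \<open>l < n\<close>] \<open>l < n\<close>
    by auto
  ultimately have cond_iii: "\<forall>j<m. z n j = z 0 j"
    using \<open>k < m\<close> unfolding z by (auto intro: trochoid_vertex_periodic)
  have cond_i: "\<forall>i<n. z i 0 = z (i + 1) (m - 1)"
    using trochoid_vertex_pivot[of m] \<open>k < m\<close> unfolding z by simp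
  have cond_ii: "\<forall>i<n. \<forall>j. 1 \<le> j \<and> j \<le> m - 1 \<longrightarrow> rotate (z i 0) t (z i j) = z (i + 1) (j - 1)"
    unfolding z by (simp add: trochoid_vertex_rotate)
  have "z 0 0 \<noteq> z 0 1"
    unfolding z using cis_rational_ne_1[OF \<open>0 < k\<close> \<open>k < m\<close>] assms(8) \<open>k < m\<close>
    by (intro trochoid_vertex_distinct) auto
  then have nonconst: "\<exists>i i' j j'. i \<le> n \<and> i' \<le> n \<and> j < m \<and> j' < m \<and> z i j \<noteq> z i' j'"
    using \<open>k < m\<close> \<open>0 < k\<close> by (intro exI[of _ 0] exI[of _ "0::nat"] exI[of _ "1::nat"]) auto
  show ?thesis
    using cond_i cond_ii cond_iii nonconst
      nontrivial_rotation_coloring[where p = p and q = q and z = z and t = t, folded m_def n_def]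
    by blast
qed

end
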